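(* Let $\mathcal{H}$ be a finite-dimensional Hilbert space, $\mathcal{O}\in\mathcal{L}(\mathcal{H})$ Hermitian, $\rho$ a quantum state on $\mathcal{H}$, $n\geq1$ and $1\leq k\leq n$. Let \[T_k=\frac{1}{2\lfloor n/k\rfloor}\sum_{i=0}^{\lfloor n/k\rfloor-1}\left(A_i+A_i^\dagger\right),\] where $A_i=U_{s_{J_i}}\,\big(I^{\otimes ik}\otimes\mathcal{O}\otimes I^{\otimes n-ik-1}\big)$ and $J_i=(ik+1,\ldots,ik+k)$. Then $\mathbf{Var}[T_k]\leq \dfrac{2k\|\mathcal{O}\|^2}{n}$, where $\|\mathcal{O}\|$ is the operator norm.
   Context: For $\pi$ in the symmetric group $\mathfrak{S}_n$, $U_\pi$ is the unitary on $\mathcal{H}^{\otimes n}$ with $U_\pi\ket{\psi_1}\cdots\ket{\psi_n}=\ket{\psi_{\pi^{-1}(1)}}\cdots\ket{\psi_{\pi^{-1}(n)}}$. For a sequence $J=(j_1,\ldots,j_l)$ of distinct elements of $\{1,\ldots,n\}$, $s_J\in\mathfrak{S}_n$ maps $j_t\mapsto j_{t+1}$ for $t<l$, $j_l\mapsto j_1$, and fixes all other elements. For a Hermitian $\mathcal{Q}$ on $\mathcal{H}^{\otimes n}$, $\mathbf{Var}[\mathcal{Q}]=\operatorname{tr}(\mathcal{Q}^2\rho^{\otimes n})-\operatorname{tr}(\mathcal{Q}\rho^{\otimes n})^2$. *)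

theory Defs
  imports Complex_Main "HOL-Library.FuncSet"
begin

text \<open>The Hilbert space H is C^d with orthonormal basis indexed by
 {0..<d}; an operator on H is a function nat => nat => complex (matrix entries, only
 indices < d matter). The n-fold tensor power has orthonormal basis indexed by the
 extensional functions {0..<n} ->E {0..<d}; operators on it are matrices indexed by
 such functions. Tensor factors are numbered 0..n-1 (paper: 1..n).\<close>

type_synonym op1 = "nat \<Rightarrow> nat \<Rightarrow> complex"
type_synonym opn = "(nat \<Rightarrow> nat) \<Rightarrow> (nat \<Rightarrow> nat) \<Rightarrow> complex"

definition basis_idx :: "nat \<Rightarrow> nat \<Rightarrow> (nat \<Rightarrow> nat) set" where
  "basis_idx d n = ({0..<n} \<rightarrow>\<^sub>E {0..<d})"

definition hermitian1 :: "nat \<Rightarrow> op1 \<Rightarrow> bool" where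
  "hermitian1 d A \<longleftrightarrow> (\<forall>i<d. \<forall>j<d. A i j = cnj (A j i))"

definition density1 :: "nat \<Rightarrow> op1 \<Rightarrow> bool" where
  "density1 d \<rho> \<longleftrightarrow> hermitian1 d \<rho>
     \<and> (\<forall>v. 0 \<le> Re (\<Sum>i<d. \<Sum>j<d. cnj (v i) * \<rho> i j * v j))
     \<and> (\<Sum>i<d. \<rho> i i) = 1"

definition opnorm1 :: "nat \<Rightarrow> op1 \<Rightarrow> real" where
  "opnorm1 d A = Sup {sqrt (\<Sum>i<d. (cmod (\<Sum>j<d. A i j * v j))\<^sup>2) | v.
                        (\<Sum>j<d. (cmod (v j))\<^sup>2) = 1}"

definition opmult :: "nat \<Rightarrow> nat \<Rightarrow> opn \<Rightarrow> opn \<Rightarrow> opn" where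
  "opmult d n A B = (\<lambda>f g. \<Sum>h\<in>basis_idx d n. A f h * B h g)"

definition adj :: "opn \<Rightarrow> opn" where
  "adj A = (\<lambda>f g. cnj (A g f))"

definition optrace :: "nat \<Rightarrow> nat \<Rightarrow> opn \<Rightarrow> complex" where
  "optrace d n A = (\<Sum>f\<in>basis_idx d n. A f f)"

definition tensor_pow :: "nat \<Rightarrow> op1 \<Rightarrow> opn" where
  "tensor_pow n \<rho> = (\<lambda>f g. \<Prod>i<n. \<rho> (f i) (g i))"

text \<open>I^{\<otimes>m} \<otimes> Ob \<otimes> I^{\<otimes>(n-m-1)}: Ob acting on factor m (0-based).\<close>
definition local_op :: "nat \<Rightarrow> nat \<Rightarrow> op1 \<Rightarrow> opn" where
  "local_op n m Ob = (\<lambda>f g. if (\<forall>i<n. i \<noteq> m \<longrightarrow> f i = g i) then Ob (f m) (g m) else 0)"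

text \<open>U_pi with U_pi |psi_1..psi_n> = |psi_{pi^-1(1)} .. psi_{pi^-1(n)}>:
  U_pi e_g = e_f with f (pi i) = g i.\<close>
definition perm_op :: "nat \<Rightarrow> (nat \<Rightarrow> nat) \<Rightarrow> opn" where
  "perm_op n \<pi> = (\<lambda>f g. if (\<forall>i<n. f (\<pi> i) = g i) then 1 else 0)"

definition cyc :: "nat \<Rightarrow> nat \<Rightarrow> nat \<Rightarrow> nat" where
  "cyc a k j = (if a \<le> j \<and> j + 1 < a + k then j + 1 else if j + 1 = a + k then a else j)"

definition A_op :: "nat \<Rightarrow> nat \<Rightarrow> nat \<Rightarrow> op1 \<Rightarrow> nat \<Rightarrow> opn" where
  "A_op d n k Ob i = opmult d n (perm_op n (cyc (i * k) k)) (local_op n (i * k) Ob)"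

definition T_op :: "nat \<Rightarrow> nat \<Rightarrow> nat \<Rightarrow> op1 \<Rightarrow> opn" where
  "T_op d n k Ob = (\<lambda>f g. (1 / (2 * of_nat (n div k))) *
      (\<Sum>i<n div k. A_op d n k Ob i f g + adj (A_op d n k Ob i) f g))"

definition variance :: "nat \<Rightarrow> nat \<Rightarrow> op1 \<Rightarrow> opn \<Rightarrow> complex" where
  "variance d n \<rho> Q = optrace d n (opmult d n (opmult d n Q Q) (tensor_pow n \<rho>))
                       - (optrace d n (opmult d n Q (tensor_pow n \<rho>)))\<^sup>2"

end

theory Submission
  imports Defs
begin

text \<open>
  The blocks J_i are disjoint, so the symmetrised terms B_i = A_i + A_i^* act on disjoint sets of
  tensor factors and are uncorrelated in the product state \<rho>^(\<otimes>n); hence, with m = \<lfloor>n/k\<rfloor>,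
  Var[T_k] = (2m)^-2 \<Sigma>_i Var[B_i]. Each A_i is a permutation followed by O on a single factor,
  so \<parallel>B_i\<parallel> \<le> 2\<parallel>O\<parallel> and Var[B_i] \<le> tr(B_i^2 \<rho>^(\<otimes>n)) \<le> 4\<parallel>O\<parallel>^2. For the last step \<rho> is
  written as a Gram matrix \<Sigma>_l r_l r_l^* (a Cholesky factorisation of a positive semidefinite
  matrix), which makes tr(B^2 \<rho>^(\<otimes>n)) a convex combination of values \<parallel>B w\<parallel>^2 at unit vectors w.
  Altogether Var[T_k] \<le> \<parallel>O\<parallel>^2 / m \<le> 2k\<parallel>O\<parallel>^2 / n.
\<close>

section \<open>Positive semidefinite matrices and their Gram factorisation\<close>

lemma hermitian1D: "hermitian1 d A \<Longrightarrow> i < d \<Longrightarrow> j < d \<Longrightarrow> A i j = cnj (A j i)"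
  unfolding hermitian1_def by blast

definition quad_form :: "nat \<Rightarrow> op1 \<Rightarrow> (nat \<Rightarrow> complex) \<Rightarrow> complex" where
  "quad_form d M v = (\<Sum>a<d. \<Sum>b<d. cnj (v a) * M a b * v b)"

definition psd1 :: "nat \<Rightarrow> op1 \<Rightarrow> bool" where
  "psd1 d M \<longleftrightarrow> hermitian1 d M \<and> (\<forall>v. 0 \<le> Re (quad_form d M v))"

lemma density1_imp_psd1: "density1 d \<rho> \<Longrightarrow> psd1 d \<rho>"
  unfolding density1_def psd1_def quad_form_def by blast

lemma quad_form_add_delta:
  assumes H: "hermitian1 d M" and m: "m < d"
  shows "quad_form d M (\<lambda>i. v i + (if i = m then t else 0)) =
     quad_form d M v + cnj t * (\<Sum>b<d. M m b * v b) + cnj (\<Sum>b<d. M m b * v b) * t + cnj t * t * M m m"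
proof -
  have expand: "cnj (v a + (if a = m then t else 0)) * M a b * (v b + (if b = m then t else 0)) =
     cnj (v a) * M a b * v b + (if b = m then cnj (v a) * M a m * t else 0)
     + (if a = m then cnj t * M m b * v b else 0) + (if a = m then (if b = m then cnj t * t * M m m else 0) else 0)" for a b
    by (cases "a = m"; cases "b = m") (simp_all add: distrib_left distrib_right)
  have column: "(\<Sum>a<d. cnj (v a) * M a m * t) = cnj (\<Sum>b<d. M m b * v b) * t"
  proof -
    have "(\<Sum>a<d. cnj (v a) * M a m * t) = (\<Sum>a<d. cnj (M m a * v a) * t)"
      using H m by (intro sum.cong refl) (simp add: hermitian1D[of d M _ m])
    also have "\<dots> = cnj (\<Sum>b<d. M m b * v b) * t"
      by (simp only: sum_distrib_right[symmetric] cnj_sum)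
    finally show ?thesis .
  qed
  have "quad_form d M (\<lambda>i. v i + (if i = m then t else 0)) =
     quad_form d M v + (\<Sum>a<d. \<Sum>b<d. (if b = m then cnj (v a) * M a m * t else 0))
     + (\<Sum>a<d. \<Sum>b<d. (if a = m then cnj t * M m b * v b else 0))
     + (\<Sum>a<d. \<Sum>b<d. (if a = m then (if b = m then cnj t * t * M m m else 0) else 0))"
    unfolding quad_form_def expand by (simp only: sum.distrib)
  also have "(\<Sum>a<d. \<Sum>b<d. (if b = m then cnj (v a) * M a m * t else 0)) = cnj (\<Sum>b<d. M m b * v b) * t"
    using m column by simp
  also have "(\<Sum>a<d. \<Sum>b<d. (if a = m then cnj t * M m b * v b else 0)) = cnj t * (\<Sum>b<d. M m b * v b)"
    using m by (subst sum.swap) (simp add: sum_distrib_left mult.assoc)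
  also have "(\<Sum>a<d. \<Sum>b<d. (if a = m then (if b = m then cnj t * t * M m m else 0) else 0)) = cnj t * t * M m m"
    using m by (subst sum.swap) simp
  finally show ?thesis by simp
qed

lemma quad_form_delta:
  assumes "hermitian1 d M" "m < d"
  shows "quad_form d M (\<lambda>i. if i = m then t else 0) = cnj t * t * M m m"
  using quad_form_add_delta[OF assms, of "\<lambda>i. 0" t] by (simp add: quad_form_def)

lemma psd1_diag:
  assumes P: "psd1 d M" and m: "m < d"
  shows "M m m = of_real (Re (M m m))" "0 \<le> Re (M m m)"
proof -
  have H: "hermitian1 d M" using P unfolding psd1_def by blast
  have "M m m = cnj (M m m)" using hermitian1D[OF H m m] .
  then show "M m m = of_real (Re (M m m))" using complex_eq_iff by auto
  have "0 \<le> Re (quad_form d M (\<lambda>i. if i = m then 1 else 0))" using P unfolding psd1_def by blast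
  then show "0 \<le> Re (M m m)" using quad_form_delta[OF H m, of 1] by simp
qed

lemma psd1_zero_diag_row:
  assumes P: "psd1 d M" and m: "m < d" and b: "b < d" and zero: "M m m = 0"
  shows "M m b = 0"
proof (rule ccontr)
  assume nz: "M m b \<noteq> 0"
  have H: "hermitian1 d M" using P unfolding psd1_def by blast
  define z where "z = M m b"
  define v where "v = (\<lambda>i. if i = b then (1::complex) else 0)"
  define s where "s = (\<bar>Re (M b b)\<bar> + 1) / (2 * (cmod z)\<^sup>2)"
  define t where "t = - z * of_real s"
  \<comment> \<open>moving along the m-th basis vector decreases the form linearly while its m-th diagonal entry is 0\<close>
  have "quad_form d M (\<lambda>i. v i + (if i = m then t else 0)) = M b b + cnj t * z + cnj z * t"
  proof -
    have "(\<Sum>j<d. M m j * v j) = z" using b unfolding v_def z_def by (simp add: if_distrib cong: if_cong)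
    moreover have "quad_form d M v = M b b" unfolding v_def using quad_form_delta[OF H b, of 1] by simp
    ultimately show ?thesis using quad_form_add_delta[OF H m, of v t] zero by simp
  qed
  moreover have "Re (cnj t * z + cnj z * t) = - 2 * s * (cmod z)\<^sup>2"
    unfolding t_def cmod_power2 by (simp add: algebra_simps power2_eq_square)
  moreover have "2 * s * (cmod z)\<^sup>2 = \<bar>Re (M b b)\<bar> + 1" unfolding s_def using nz z_def by simp
  moreover have "0 \<le> Re (quad_form d M (\<lambda>i. v i + (if i = m then t else 0)))" using P unfolding psd1_def by blast
  ultimately show False by simp
qed

definition pivot_col :: "op1 \<Rightarrow> nat \<Rightarrow> nat \<Rightarrow> complex" where
  "pivot_col M m a = M a m / of_real (sqrt (Re (M m m)))"

lemma cnj_pivot_col: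
  assumes "psd1 d M" "m < d" "b < d"
  shows "cnj (pivot_col M m b) = M m b / of_real (sqrt (Re (M m m)))"
  using assms hermitian1D[of d M m b] unfolding psd1_def pivot_col_def by simp

lemma pivot_col_pivot:
  assumes "psd1 d M" "m < d"
  shows "pivot_col M m m = of_real (sqrt (Re (M m m)))"
proof -
  have "M m m = of_real (sqrt (Re (M m m)) * sqrt (Re (M m m)))"
    using psd1_diag[OF assms] by simp
  then show ?thesis unfolding pivot_col_def by (metis nonzero_mult_div_cancel_right of_real_mult div_0 mult_zero_left)
qed

lemma schur_complement_vanishes:
  assumes P: "psd1 d M" and m: "m < d" and pos: "Re (M m m) > 0"
    and zero: "\<forall>a<d. \<forall>b<d. (a < m \<or> b < m) \<longrightarrow> M a b = 0"
  shows "\<forall>a<d. \<forall>b<d. (a < Suc m \<or> b < Suc m) \<longrightarrow> M a b - pivot_col M m a * cnj (pivot_col M m b) = 0"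
proof (intro allI impI)
  fix a b assume a: "a < d" and b: "b < d" and ab: "a < Suc m \<or> b < Suc m"
  have s: "sqrt (Re (M m m)) \<noteq> 0" using pos by simp
  consider "a < m \<or> b < m" | "a = m" | "b = m" using ab by linarith
  then show "M a b - pivot_col M m a * cnj (pivot_col M m b) = 0"
  proof cases
    case 1
    then show ?thesis using zero a b m unfolding pivot_col_def by auto
  next
    case 2
    then show ?thesis using cnj_pivot_col[OF P m b] pivot_col_pivot[OF P m] s by simp
  next
    case 3
    then show ?thesis using cnj_pivot_col[OF P m m] pivot_col_pivot[OF P m] s
      unfolding pivot_col_def[of M m a] by simp
  qed
qed

lemma psd1_schur_complement:
  assumes P: "psd1 d M" and m: "m < d" and pos: "Re (M m m) > 0"
  shows "psd1 d (\<lambda>a b. M a b - pivot_col M m a * cnj (pivot_col M m b))"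
proof -
  have H: "hermitian1 d M" using P unfolding psd1_def by blast
  let ?r = "pivot_col M m"
  define s where "s = sqrt (Re (M m m))"
  have s0: "s > 0" using pos s_def by simp
  have Mmm: "M m m = of_real (s * s)" using psd1_diag(1)[OF P m] pos s_def by simp
  have "hermitian1 d (\<lambda>a b. M a b - ?r a * cnj (?r b))"
    unfolding hermitian1_def
  proof (intro allI impI)
    fix i j assume "i < d" "j < d"
    then have "M i j = cnj (M j i)" by (rule hermitian1D[OF H])
    then show "M i j - ?r i * cnj (?r j) = cnj (M j i - ?r j * cnj (?r i))" by simp
  qed
  moreover have "0 \<le> Re (quad_form d (\<lambda>a b. M a b - ?r a * cnj (?r b)) v)" for v
  proof -
    define \<beta> where "\<beta> = (\<Sum>b<d. M m b * v b)"
    define t where "t = - \<beta> / M m m"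
    have r_v: "(\<Sum>b<d. cnj (?r b) * v b) = \<beta> / of_real s"
      unfolding \<beta>_def s_def using cnj_pivot_col[OF P m] by (simp add: sum_divide_distrib)
    have v_r: "(\<Sum>a<d. cnj (v a) * ?r a) = cnj \<beta> / of_real s"
      using arg_cong[OF r_v, of cnj] by (simp add: mult.commute)
    have "quad_form d (\<lambda>a b. M a b - ?r a * cnj (?r b)) v
        = (\<Sum>a<d. \<Sum>b<d. cnj (v a) * M a b * v b - cnj (v a) * ?r a * (cnj (?r b) * v b))"
      unfolding quad_form_def by (simp add: algebra_simps)
    also have "\<dots> = quad_form d M v - (\<Sum>a<d. cnj (v a) * ?r a) * (\<Sum>b<d. cnj (?r b) * v b)"
      unfolding sum_product quad_form_def by (simp add: sum_subtractf)
    also have "\<dots> = quad_form d M v - cnj \<beta> * \<beta> / M m m"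
      unfolding r_v v_r Mmm by (simp add: power2_eq_square)
    \<comment> \<open>the Schur complement form is the form of M at the minimiser along the m-th coordinate\<close>
    also have "\<dots> = quad_form d M (\<lambda>i. v i + (if i = m then t else 0))"
      unfolding quad_form_add_delta[OF H m] \<beta>_def[symmetric] t_def Mmm using s0
      by (simp add: field_simps)
    finally show ?thesis using P unfolding psd1_def by simp
  qed
  ultimately show ?thesis unfolding psd1_def by blast
qed

lemma psd1_zero_pivot_vanishes:
  assumes P: "psd1 d M" and m: "m < d" and nonpos: "\<not> Re (M m m) > 0"
    and zero: "\<forall>a<d. \<forall>b<d. (a < m \<or> b < m) \<longrightarrow> M a b = 0"
  shows "\<forall>a<d. \<forall>b<d. (a < Suc m \<or> b < Suc m) \<longrightarrow> M a b = 0"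
proof -
  have "M m m = 0" using psd1_diag[OF P m] nonpos by (metis less_eq_real_def of_real_0)
  then have row: "M m b = 0" if "b < d" for b using psd1_zero_diag_row[OF P m that] by blast
  have "M b m = 0" if "b < d" for b
    using P hermitian1D[of d M b m] row[OF that] that m unfolding psd1_def by simp
  then show ?thesis using zero row by (metis less_Suc_eq)
qed

lemma psd1_gram_from:
  "psd1 d M \<Longrightarrow> (\<forall>a<d. \<forall>b<d. (a < m \<or> b < m) \<longrightarrow> M a b = 0) \<Longrightarrow> m \<le> d \<Longrightarrow>
   \<exists>r. \<forall>a<d. \<forall>b<d. M a b = (\<Sum>l\<in>{m..<d}. r l a * cnj (r l b))"
proof (induction "d - m" arbitrary: m M)
  case 0
  then show ?case by auto
next
  case (Suc q)
  then have m: "m < d" and q: "q = d - Suc m" by simp_all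
  have split: "(\<Sum>l\<in>{m..<d}. r l a * cnj (r l b)) = r m a * cnj (r m b) + (\<Sum>l\<in>{Suc m..<d}. r l a * cnj (r l b))"
    for r :: "nat \<Rightarrow> nat \<Rightarrow> complex" and a b
    using m by (simp add: sum.atLeast_Suc_lessThan)
  show ?case
  proof (cases "Re (M m m) > 0")
    case True
    define c where "c = pivot_col M m"
    obtain r where r: "\<forall>a<d. \<forall>b<d. M a b - c a * cnj (c b) = (\<Sum>l\<in>{Suc m..<d}. r l a * cnj (r l b))"
      using Suc.hyps(1)[OF q psd1_schur_complement[OF Suc.prems(1) m True]
          schur_complement_vanishes[OF Suc.prems(1) m True Suc.prems(2)]] m
      unfolding c_def by auto
    show ?thesis
    proof (intro exI allI impI)
      fix a b assume "a < d" "b < d"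
      then show "M a b = (\<Sum>l\<in>{m..<d}. (r(m := c)) l a * cnj ((r(m := c)) l b))"
        unfolding split using r by (simp add: diff_eq_eq add.commute)
    qed
  next
    case False
    obtain r where r: "\<forall>a<d. \<forall>b<d. M a b = (\<Sum>l\<in>{Suc m..<d}. r l a * cnj (r l b))"
      using Suc.hyps(1)[OF q Suc.prems(1) psd1_zero_pivot_vanishes[OF Suc.prems(1) m False Suc.prems(2)]] m
      by auto
    show ?thesis
    proof (intro exI allI impI)
      fix a b assume "a < d" "b < d"
      then show "M a b = (\<Sum>l\<in>{m..<d}. (r(m := (\<lambda>_. 0))) l a * cnj ((r(m := (\<lambda>_. 0))) l b))"
        unfolding split using r by simp
    qed
  qed
qed

lemma psd1_gram:
  "psd1 d M \<Longrightarrow> \<exists>r. \<forall>a<d. \<forall>b<d. M a b = (\<Sum>l<d. r l a * cnj (r l b))"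
  using psd1_gram_from[of d M 0] by (simp add: atLeast0LessThan)

lemma basis_idx_eq: "basis_idx d n = {..<n} \<rightarrow>\<^sub>E {0..<d}"
  unfolding basis_idx_def by (simp add: atLeast0LessThan)

lemma basis_idx_lessD: "f \<in> basis_idx d n \<Longrightarrow> j < n \<Longrightarrow> f j < d"
  unfolding basis_idx_def using PiE_mem[of f "{0..<n}" "\<lambda>_. {0..<d}" j] by simp

definition merge :: "'a set \<Rightarrow> ('a \<Rightarrow> 'b) \<Rightarrow> ('a \<Rightarrow> 'b) \<Rightarrow> 'a \<Rightarrow> 'b" where
  "merge S a c = (\<lambda>j. if j \<in> S then a j else c j)"

lemma restrict_merge_in: "a \<in> S \<rightarrow>\<^sub>E D \<Longrightarrow> restrict (merge S a c) S = a"
  unfolding merge_def by (auto simp: fun_eq_iff PiE_iff extensional_def)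

lemma restrict_merge_out: "c \<in> (N - S) \<rightarrow>\<^sub>E D \<Longrightarrow> restrict (merge S a c) (N - S) = c"
  unfolding merge_def by (auto simp: fun_eq_iff PiE_iff extensional_def)

lemma merge_restrict: "S \<subseteq> N \<Longrightarrow> f \<in> N \<rightarrow>\<^sub>E D \<Longrightarrow> merge S (restrict f S) (restrict f (N - S)) = f"
  unfolding merge_def by (auto simp: fun_eq_iff PiE_iff extensional_def)

lemma merge_in_PiE: "S \<subseteq> N \<Longrightarrow> a \<in> S \<rightarrow>\<^sub>E D \<Longrightarrow> c \<in> (N - S) \<rightarrow>\<^sub>E D \<Longrightarrow> merge S a c \<in> N \<rightarrow>\<^sub>E D"
  unfolding merge_def by (auto simp: PiE_iff extensional_def)

lemma merge_eq_out_iff: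
  "c \<in> (N - S) \<rightarrow>\<^sub>E D \<Longrightarrow> e \<in> (N - S) \<rightarrow>\<^sub>E D \<Longrightarrow>
   (\<forall>j\<in>N - S. merge S a c j = merge S b e j) \<longleftrightarrow> c = e"
  unfolding merge_def by (auto intro: PiE_ext)

lemma merge_eq_in_iff:
  assumes S: "S \<subseteq> N" and ab: "a \<in> S \<rightarrow>\<^sub>E D" "b \<in> S \<rightarrow>\<^sub>E D"
  shows "(\<forall>j\<in>N - (N - S). merge S a c j = merge S b e j) \<longleftrightarrow> a = b"
proof -
  have "(\<forall>j\<in>N - (N - S). merge S a c j = merge S b e j) \<longleftrightarrow> (\<forall>j\<in>S. a j = b j)"
    using S unfolding merge_def by auto
  also have "\<dots> \<longleftrightarrow> a = b" using ab by (auto intro: PiE_ext)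
  finally show ?thesis .
qed

lemma sum_PiE_merge:
  assumes S: "S \<subseteq> N"
  shows "(\<Sum>f \<in> N \<rightarrow>\<^sub>E D. F f) = (\<Sum>a \<in> S \<rightarrow>\<^sub>E D. \<Sum>c \<in> (N - S) \<rightarrow>\<^sub>E D. F (merge S a c))"
proof -
  have "(\<Sum>a \<in> S \<rightarrow>\<^sub>E D. \<Sum>c \<in> (N - S) \<rightarrow>\<^sub>E D. F (merge S a c)) =
        (\<Sum>(a,c) \<in> (S \<rightarrow>\<^sub>E D) \<times> ((N - S) \<rightarrow>\<^sub>E D). F (merge S a c))"
    by (rule sum.cartesian_product)
  also have "\<dots> = (\<Sum>f \<in> N \<rightarrow>\<^sub>E D. F f)"
    by (rule sum.reindex_bij_witness[of _ "\<lambda>f. (restrict f S, restrict f (N - S))" "\<lambda>(a,c). merge S a c"])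
       (use S in \<open>auto simp: restrict_merge_in restrict_merge_out merge_restrict merge_def PiE_iff extensional_def\<close>)
  finally show ?thesis by simp
qed

lemma tensor_pow_merge:
  assumes S: "S \<subseteq> {..<n}"
  shows "tensor_pow n \<rho> (merge S b e) (merge S a c) =
     (\<Prod>j\<in>S. \<rho> (b j) (a j)) * (\<Prod>j\<in>{..<n} - S. \<rho> (e j) (c j))"
proof -
  have "tensor_pow n \<rho> (merge S b e) (merge S a c) =
      (\<Prod>j\<in>{..<n} - S. \<rho> (merge S b e j) (merge S a c j)) * (\<Prod>j\<in>S. \<rho> (merge S b e j) (merge S a c j))"
    unfolding tensor_pow_def using S by (simp add: prod.subset_diff)
  also have "\<dots> = (\<Prod>j\<in>{..<n} - S. \<rho> (e j) (c j)) * (\<Prod>j\<in>S. \<rho> (b j) (a j))"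
    unfolding merge_def by (intro arg_cong2[where f="(*)"] prod.cong) auto
  finally show ?thesis by (simp add: mult.commute)
qed

lemma sum_PiE_prod_diag:
  fixes \<rho> :: op1
  assumes "(\<Sum>t<d. \<rho> t t) = 1" and "finite T"
  shows "(\<Sum>c\<in>T \<rightarrow>\<^sub>E {0..<d}. \<Prod>j\<in>T. \<rho> (c j) (c j)) = (1::complex)"
proof -
  have "(\<Sum>c\<in>T \<rightarrow>\<^sub>E {0..<d}. \<Prod>j\<in>T. \<rho> (c j) (c j)) = (\<Prod>j\<in>T. \<Sum>t\<in>{0..<d}. \<rho> t t)"
    by (rule prod_sum_PiE[where f="\<lambda>j t. \<rho> t t", symmetric]) (use assms(2) in auto)
  also have "\<dots> = 1" using assms(1) by (simp add: atLeast0LessThan)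
  finally show ?thesis .
qed

definition expval :: "nat \<Rightarrow> nat \<Rightarrow> op1 \<Rightarrow> opn \<Rightarrow> complex" where
  "expval d n \<rho> X = (\<Sum>f\<in>basis_idx d n. \<Sum>h\<in>basis_idx d n. X f h * tensor_pow n \<rho> h f)"

lemma variance_expval: "variance d n \<rho> Q = expval d n \<rho> (opmult d n Q Q) - (expval d n \<rho> Q)\<^sup>2"
  unfolding variance_def optrace_def expval_def opmult_def ..

text \<open>\<open>acts_on d n S X\<close>: X is x \<otimes> I, with x acting on the tensor factors in S.\<close>

definition acts_on :: "nat \<Rightarrow> nat \<Rightarrow> nat set \<Rightarrow> opn \<Rightarrow> bool" where
  "acts_on d n S X \<longleftrightarrow> (\<exists>x. \<forall>f\<in>basis_idx d n. \<forall>g\<in>basis_idx d n.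
      X f g = (if \<forall>j\<in>{..<n} - S. f j = g j then x (restrict f S) (restrict g S) else 0))"

lemma acts_on_adj:
  assumes "acts_on d n S X"
  shows "acts_on d n S (adj X)"
proof -
  obtain x where x: "\<forall>f\<in>basis_idx d n. \<forall>g\<in>basis_idx d n.
      X f g = (if \<forall>j\<in>{..<n} - S. f j = g j then x (restrict f S) (restrict g S) else 0)"
    using assms unfolding acts_on_def by blast
  have "adj X f g = (if \<forall>j\<in>{..<n} - S. f j = g j then cnj (x (restrict g S) (restrict f S)) else 0)"
    if "f \<in> basis_idx d n" "g \<in> basis_idx d n" for f g
    using x that unfolding adj_def by (auto simp: eq_commute[of "f _"])
  then show ?thesis unfolding acts_on_def by (intro exI[of _ "\<lambda>a b. cnj (x b a)"]) blast
qed

lemma acts_on_add: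
  assumes "acts_on d n S X" "acts_on d n S Y"
  shows "acts_on d n S (\<lambda>f g. X f g + Y f g)"
proof -
  obtain x y where
    x: "\<forall>f\<in>basis_idx d n. \<forall>g\<in>basis_idx d n. X f g = (if \<forall>j\<in>{..<n} - S. f j = g j then x (restrict f S) (restrict g S) else 0)" and
    y: "\<forall>f\<in>basis_idx d n. \<forall>g\<in>basis_idx d n. Y f g = (if \<forall>j\<in>{..<n} - S. f j = g j then y (restrict f S) (restrict g S) else 0)"
    using assms unfolding acts_on_def by blast
  show ?thesis unfolding acts_on_def
    by (rule exI[of _ "\<lambda>a b. x a b + y a b"]) (use x y in auto)
qed

lemma acts_on_mono:
  assumes SS: "S \<subseteq> S'" and S'n: "S' \<subseteq> {..<n}" and X: "acts_on d n S X"
  shows "acts_on d n S' X"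
proof -
  obtain x where x: "\<forall>f\<in>basis_idx d n. \<forall>g\<in>basis_idx d n.
      X f g = (if \<forall>j\<in>{..<n} - S. f j = g j then x (restrict f S) (restrict g S) else 0)"
    using X unfolding acts_on_def by blast
  have restr: "restrict (restrict h S') S = restrict h S" for h :: "nat \<Rightarrow> nat"
    using SS by (auto simp: fun_eq_iff restrict_def)
  have "(\<forall>j\<in>{..<n} - S. f j = g j) \<longleftrightarrow>
      (\<forall>j\<in>{..<n} - S'. f j = g j) \<and> (\<forall>j\<in>S' - S. restrict f S' j = restrict g S' j)" for f g :: "nat \<Rightarrow> nat"
    using SS S'n by auto
  then show ?thesis unfolding acts_on_def
    by (intro exI[of _ "\<lambda>a b. if \<forall>j\<in>S' - S. a j = b j then x (restrict a S) (restrict b S) else 0"])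
       (use x in \<open>simp add: restr Int_absorb1[OF SS]\<close>)
qed

lemma acts_on_merge:
  assumes S: "S \<subseteq> {..<n}" and X: "acts_on d n S X"
  obtains x where "\<And>a b c e. a \<in> S \<rightarrow>\<^sub>E {0..<d} \<Longrightarrow> b \<in> S \<rightarrow>\<^sub>E {0..<d} \<Longrightarrow>
      c \<in> ({..<n} - S) \<rightarrow>\<^sub>E {0..<d} \<Longrightarrow> e \<in> ({..<n} - S) \<rightarrow>\<^sub>E {0..<d} \<Longrightarrow>
      X (merge S a c) (merge S b e) = x a b * (if c = e then 1 else 0)"
proof -
  obtain x where x: "\<forall>f\<in>basis_idx d n. \<forall>g\<in>basis_idx d n.
      X f g = (if \<forall>j\<in>{..<n} - S. f j = g j then x (restrict f S) (restrict g S) else 0)"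
    using X unfolding acts_on_def by blast
  show ?thesis
  proof (rule that[of x])
    fix a b c e assume a: "a \<in> S \<rightarrow>\<^sub>E {0..<d}" and b: "b \<in> S \<rightarrow>\<^sub>E {0..<d}"
      and c: "c \<in> ({..<n} - S) \<rightarrow>\<^sub>E {0..<d}" and e: "e \<in> ({..<n} - S) \<rightarrow>\<^sub>E {0..<d}"
    have "merge S a c \<in> basis_idx d n" "merge S b e \<in> basis_idx d n"
      unfolding basis_idx_eq using merge_in_PiE[OF S] a b c e by auto
    then show "X (merge S a c) (merge S b e) = x a b * (if c = e then 1 else 0)"
      using x merge_eq_out_iff[OF c e] restrict_merge_in[OF a] restrict_merge_in[OF b] by simp
  qed
qed

lemma acts_on_complement_merge:
  assumes S: "S \<subseteq> {..<n}" and Y: "acts_on d n ({..<n} - S) Y"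
  obtains y where "\<And>a b c e. a \<in> S \<rightarrow>\<^sub>E {0..<d} \<Longrightarrow> b \<in> S \<rightarrow>\<^sub>E {0..<d} \<Longrightarrow>
      c \<in> ({..<n} - S) \<rightarrow>\<^sub>E {0..<d} \<Longrightarrow> e \<in> ({..<n} - S) \<rightarrow>\<^sub>E {0..<d} \<Longrightarrow>
      Y (merge S a c) (merge S b e) = (if a = b then 1 else 0) * y c e"
proof -
  obtain y where y: "\<forall>f\<in>basis_idx d n. \<forall>g\<in>basis_idx d n.
      Y f g = (if \<forall>j\<in>{..<n} - ({..<n} - S). f j = g j
               then y (restrict f ({..<n} - S)) (restrict g ({..<n} - S)) else 0)"
    using Y unfolding acts_on_def by blast
  show ?thesis
  proof (rule that[of y])
    fix a b c e assume a: "a \<in> S \<rightarrow>\<^sub>E {0..<d}" and b: "b \<in> S \<rightarrow>\<^sub>E {0..<d}"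
      and c: "c \<in> ({..<n} - S) \<rightarrow>\<^sub>E {0..<d}" and e: "e \<in> ({..<n} - S) \<rightarrow>\<^sub>E {0..<d}"
    have "merge S a c \<in> basis_idx d n" "merge S b e \<in> basis_idx d n"
      unfolding basis_idx_eq using merge_in_PiE[OF S] a b c e by auto
    then show "Y (merge S a c) (merge S b e) = (if a = b then 1 else 0) * y c e"
      using y merge_eq_in_iff[OF S a b] restrict_merge_out[OF c] restrict_merge_out[OF e] by simp
  qed
qed

lemma expval_product_form:
  assumes S: "S \<subseteq> {..<n}"
    and Z: "\<And>a b c e. a \<in> S \<rightarrow>\<^sub>E {0..<d} \<Longrightarrow> b \<in> S \<rightarrow>\<^sub>E {0..<d} \<Longrightarrow>
      c \<in> ({..<n} - S) \<rightarrow>\<^sub>E {0..<d} \<Longrightarrow> e \<in> ({..<n} - S) \<rightarrow>\<^sub>E {0..<d} \<Longrightarrow>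
      Z (merge S a c) (merge S b e) = x a b * y c e"
  shows "expval d n \<rho> Z =
    (\<Sum>a\<in>S \<rightarrow>\<^sub>E {0..<d}. \<Sum>b\<in>S \<rightarrow>\<^sub>E {0..<d}. x a b * (\<Prod>j\<in>S. \<rho> (b j) (a j))) *
    (\<Sum>c\<in>({..<n} - S) \<rightarrow>\<^sub>E {0..<d}. \<Sum>e\<in>({..<n} - S) \<rightarrow>\<^sub>E {0..<d}. y c e * (\<Prod>j\<in>{..<n} - S. \<rho> (e j) (c j)))"
    (is "_ = (\<Sum>a\<in>?BS. \<Sum>b\<in>?BS. ?F a b) * (\<Sum>c\<in>?BC. \<Sum>e\<in>?BC. ?G c e)")
proof -
  have "expval d n \<rho> Z = (\<Sum>a\<in>?BS. \<Sum>c\<in>?BC. \<Sum>b\<in>?BS. \<Sum>e\<in>?BC. ?F a b * ?G c e)"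
    unfolding expval_def basis_idx_eq sum_PiE_merge[OF S] tensor_pow_merge[OF S]
    by (intro sum.cong refl) (simp add: Z mult_ac)
  also have "\<dots> = (\<Sum>a\<in>?BS. \<Sum>b\<in>?BS. \<Sum>c\<in>?BC. \<Sum>e\<in>?BC. ?F a b * ?G c e)"
    by (rule sum.cong[OF refl], rule sum.swap)
  also have "\<dots> = (\<Sum>a\<in>?BS. \<Sum>b\<in>?BS. ?F a b * (\<Sum>c\<in>?BC. \<Sum>e\<in>?BC. ?G c e))"
    by (simp add: sum_distrib_left)
  also have "\<dots> = (\<Sum>a\<in>?BS. \<Sum>b\<in>?BS. ?F a b) * (\<Sum>c\<in>?BC. \<Sum>e\<in>?BC. ?G c e)"
    by (simp add: sum_distrib_right)
  finally show ?thesis .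
qed

lemma expval_mult_acts_on_disjoint:
  assumes S: "S \<subseteq> {..<n}" and X: "acts_on d n S X" and Y: "acts_on d n ({..<n} - S) Y"
    and tr: "(\<Sum>t<d. \<rho> t t) = 1"
  shows "expval d n \<rho> (opmult d n X Y) = expval d n \<rho> X * expval d n \<rho> Y"
proof -
  let ?BS = "S \<rightarrow>\<^sub>E {0..<d}" and ?BC = "({..<n} - S) \<rightarrow>\<^sub>E {0..<d}"
  obtain x where x: "\<And>a b c e. a \<in> ?BS \<Longrightarrow> b \<in> ?BS \<Longrightarrow> c \<in> ?BC \<Longrightarrow> e \<in> ?BC \<Longrightarrow>
      X (merge S a c) (merge S b e) = x a b * (if c = e then 1 else 0)"
    using acts_on_merge[OF S X] by blast
  obtain y where y: "\<And>a b c e. a \<in> ?BS \<Longrightarrow> b \<in> ?BS \<Longrightarrow> c \<in> ?BC \<Longrightarrow> e \<in> ?BC \<Longrightarrow>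
      Y (merge S a c) (merge S b e) = (if a = b then 1 else 0) * y c e"
    using acts_on_complement_merge[OF S Y] by blast
  have fin: "finite S" "finite ({..<n} - S)" "finite ?BS" "finite ?BC" using S finite_subset by (auto intro!: finite_PiE)
  have XY: "opmult d n X Y (merge S a c) (merge S b e) = x a b * y c e"
    if "a \<in> ?BS" "b \<in> ?BS" "c \<in> ?BC" "e \<in> ?BC" for a b c e
  proof -
    have "opmult d n X Y (merge S a c) (merge S b e) =
       (\<Sum>a'\<in>?BS. \<Sum>c'\<in>?BC. X (merge S a c) (merge S a' c') * Y (merge S a' c') (merge S b e))"
      unfolding opmult_def basis_idx_eq sum_PiE_merge[OF S] ..
    also have "\<dots> = (\<Sum>a'\<in>?BS. \<Sum>c'\<in>?BC. if c' = c then (if a' = b then x a b * y c e else 0) else 0)"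
      by (intro sum.cong refl) (auto simp: x y that)
    also have "\<dots> = x a b * y c e"
      using that fin by simp
    finally show ?thesis .
  qed
  have diag: "(\<Sum>c\<in>?BC. \<Sum>e\<in>?BC. (if c = e then 1 else 0) * (\<Prod>j\<in>{..<n} - S. \<rho> (e j) (c j))) = 1"
      "(\<Sum>a\<in>?BS. \<Sum>b\<in>?BS. (if a = b then 1 else 0) * (\<Prod>j\<in>S. \<rho> (b j) (a j))) = 1"
    using sum_PiE_prod_diag[where d=d and \<rho>=\<rho>, OF tr fin(1)] sum_PiE_prod_diag[where d=d and \<rho>=\<rho>, OF tr fin(2)] fin
    by (simp_all add: if_distrib[of "\<lambda>z. z * _"] cong: if_cong)
  \<comment> \<open>each identity factor contributes a power of tr \<rho> = 1\<close>
  show ?thesis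
    using expval_product_form[OF S, where d=d and \<rho>=\<rho> and Z="opmult d n X Y" and x=x and y=y, OF XY]
      expval_product_form[OF S, where d=d and \<rho>=\<rho> and Z=X and x=x and y="\<lambda>c e. if c = e then 1 else 0", OF x]
      expval_product_form[OF S, where d=d and \<rho>=\<rho> and Z=Y and x="\<lambda>a b. if a = b then 1 else 0" and y=y, OF y]
    by (simp add: diag)
qed

section \<open>Variance of scaled sums of uncorrelated observables\<close>

lemma expval_sum:
  assumes "finite I"
  shows "expval d n \<rho> (\<lambda>f g. \<Sum>i\<in>I. X i f g) = (\<Sum>i\<in>I. expval d n \<rho> (X i))"
proof -
  have "expval d n \<rho> (\<lambda>f g. \<Sum>i\<in>I. X i f g) =
      (\<Sum>f\<in>basis_idx d n. \<Sum>h\<in>basis_idx d n. \<Sum>i\<in>I. X i f h * tensor_pow n \<rho> h f)"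
    unfolding expval_def by (simp add: sum_distrib_right)
  also have "\<dots> = (\<Sum>i\<in>I. \<Sum>f\<in>basis_idx d n. \<Sum>h\<in>basis_idx d n. X i f h * tensor_pow n \<rho> h f)"
    by (subst sum.swap) (simp add: sum.swap[of _ _ I])
  finally show ?thesis unfolding expval_def .
qed

lemma expval_scale: "expval d n \<rho> (\<lambda>f g. c * X f g) = c * expval d n \<rho> X"
  unfolding expval_def by (simp add: sum_distrib_left mult.assoc)

lemma opmult_sum:
  "opmult d n (\<lambda>f g. \<Sum>i\<in>I. X i f g) (\<lambda>f g. \<Sum>j\<in>J. Y j f g) =
   (\<lambda>f g. \<Sum>i\<in>I. \<Sum>j\<in>J. opmult d n (X i) (Y j) f g)"
  unfolding opmult_def
  by (simp add: sum_product sum.swap[of _ "basis_idx d n"] sum.swap[of _ _ J])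

lemma opmult_scale:
  "opmult d n (\<lambda>f g. c * X f g) (\<lambda>f g. c' * Y f g) = (\<lambda>f g. c * c' * opmult d n X Y f g)"
  unfolding opmult_def by (simp add: sum_distrib_left mult_ac)

lemma variance_scale: "variance d n \<rho> (\<lambda>f g. c * X f g) = c\<^sup>2 * variance d n \<rho> X"
  unfolding variance_expval opmult_scale expval_scale by (simp add: power2_eq_square algebra_simps)

lemma variance_sum_uncorrelated:
  assumes I: "finite I"
    and uncorrelated: "\<And>i j. i \<in> I \<Longrightarrow> j \<in> I \<Longrightarrow> i \<noteq> j \<Longrightarrow>
      expval d n \<rho> (opmult d n (X i) (X j)) = expval d n \<rho> (X i) * expval d n \<rho> (X j)"
  shows "variance d n \<rho> (\<lambda>f g. \<Sum>i\<in>I. X i f g) = (\<Sum>i\<in>I. variance d n \<rho> (X i))"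
proof -
  let ?cov = "\<lambda>i j. expval d n \<rho> (opmult d n (X i) (X j)) - expval d n \<rho> (X i) * expval d n \<rho> (X j)"
  have "variance d n \<rho> (\<lambda>f g. \<Sum>i\<in>I. X i f g) = (\<Sum>i\<in>I. \<Sum>j\<in>I. ?cov i j)"
    unfolding variance_expval opmult_sum expval_sum[OF I] power2_eq_square sum_product
    by (simp add: sum_subtractf)
  also have "\<dots> = (\<Sum>i\<in>I. \<Sum>j\<in>I. if j = i then ?cov i i else 0)"
    using uncorrelated by (intro sum.cong refl) auto
  also have "\<dots> = (\<Sum>i\<in>I. variance d n \<rho> (X i))"
    using I by (simp add: variance_expval power2_eq_square)
  finally show ?thesis .
qed

section \<open>Operator norm bounds\<close>

lemma opnorm1_upper:
  assumes v: "(\<Sum>j<d. (cmod (v j))\<^sup>2) = 1"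
  shows "sqrt (\<Sum>i<d. (cmod (\<Sum>j<d. Ob i j * v j))\<^sup>2) \<le> opnorm1 d Ob"
  unfolding opnorm1_def
proof (rule cSup_upper)
  show "sqrt (\<Sum>i<d. (cmod (\<Sum>j<d. Ob i j * v j))\<^sup>2) \<in>
      {sqrt (\<Sum>i<d. (cmod (\<Sum>j<d. Ob i j * v j))\<^sup>2) | v. (\<Sum>j<d. (cmod (v j))\<^sup>2) = 1}"
    using v by blast
  show "bdd_above {sqrt (\<Sum>i<d. (cmod (\<Sum>j<d. Ob i j * v j))\<^sup>2) | v. (\<Sum>j<d. (cmod (v j))\<^sup>2) = 1}"
  proof (rule bdd_aboveI, safe)
    fix u :: "nat \<Rightarrow> complex" assume u: "(\<Sum>j<d. (cmod (u j))\<^sup>2) = 1"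
    have "cmod (u t) \<le> 1" if "t < d" for t
    proof -
      have "(cmod (u t))\<^sup>2 \<le> 1\<^sup>2"
        using member_le_sum[of t "{..<d}" "\<lambda>j. (cmod (u j))\<^sup>2"] that u by simp
      then show ?thesis by (rule power2_le_imp_le) simp
    qed
    then have "cmod (\<Sum>j<d. Ob i j * u j) \<le> (\<Sum>t<d. cmod (Ob i t))" for i
      by (intro order.trans[OF norm_sum] sum_mono) (auto simp: norm_mult intro: mult_left_le)
    then show "sqrt (\<Sum>i<d. (cmod (\<Sum>j<d. Ob i j * u j))\<^sup>2) \<le> sqrt (\<Sum>s<d. (\<Sum>t<d. cmod (Ob s t))\<^sup>2)"
      by (intro real_sqrt_le_mono sum_mono power_mono) auto
  qed
qed

lemma norm_mult_le_opnorm1: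
  "(\<Sum>s<d. (cmod (\<Sum>t<d. Ob s t * w t))\<^sup>2) \<le> (opnorm1 d Ob)\<^sup>2 * (\<Sum>t<d. (cmod (w t))\<^sup>2)"
proof -
  define N where "N = (\<Sum>t<d. (cmod (w t))\<^sup>2)"
  show ?thesis
  proof (cases "N = 0")
    case True
    then have "w t = 0" if "t < d" for t
      using that sum_nonneg_eq_0_iff[of "{..<d}" "\<lambda>t. (cmod (w t))\<^sup>2"] unfolding N_def by auto
    then show ?thesis by (simp add: N_def[symmetric] True)
  next
    case False
    then have N: "N > 0" unfolding N_def by (simp add: sum_nonneg order_le_neq_trans)
    define v where "v = (\<lambda>t. w t / of_real (sqrt N))"
    have scale: "(cmod (z / of_real (sqrt N)))\<^sup>2 = (cmod z)\<^sup>2 / N" for z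
      using N by (simp add: norm_divide power_divide)
    have "(\<Sum>j<d. (cmod (v j))\<^sup>2) = 1"
      unfolding v_def scale sum_divide_distrib[symmetric] N_def[symmetric] using N by simp
    then have "sqrt (\<Sum>i<d. (cmod (\<Sum>j<d. Ob i j * v j))\<^sup>2) \<le> opnorm1 d Ob"
      by (rule opnorm1_upper)
    moreover have "(\<Sum>i<d. (cmod (\<Sum>j<d. Ob i j * v j))\<^sup>2) = (\<Sum>s<d. (cmod (\<Sum>t<d. Ob s t * w t))\<^sup>2) / N"
    proof -
      have Ov: "(\<Sum>j<d. Ob i j * v j) = (\<Sum>j<d. Ob i j * w j) / of_real (sqrt N)" for i
        unfolding v_def by (simp add: sum_divide_distrib)
      show ?thesis unfolding Ov scale by (simp only: sum_divide_distrib)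
    qed
    ultimately have "sqrt ((\<Sum>s<d. (cmod (\<Sum>t<d. Ob s t * w t))\<^sup>2) / N) \<le> opnorm1 d Ob"
      by simp
    then have "(\<Sum>s<d. (cmod (\<Sum>t<d. Ob s t * w t))\<^sup>2) / N \<le> (opnorm1 d Ob)\<^sup>2"
      by (rule sqrt_le_D)
    then show ?thesis using N unfolding N_def[symmetric] by (simp add: divide_le_eq mult.commute)
  qed
qed

definition sqnorm :: "nat \<Rightarrow> nat \<Rightarrow> ((nat \<Rightarrow> nat) \<Rightarrow> complex) \<Rightarrow> real" where
  "sqnorm d n v = (\<Sum>f\<in>basis_idx d n. (cmod (v f))\<^sup>2)"

definition apply_op :: "nat \<Rightarrow> nat \<Rightarrow> opn \<Rightarrow> ((nat \<Rightarrow> nat) \<Rightarrow> complex) \<Rightarrow> (nat \<Rightarrow> nat) \<Rightarrow> complex" where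
  "apply_op d n X v = (\<lambda>f. \<Sum>g\<in>basis_idx d n. X f g * v g)"

lemma sum_basis_idx_split_factor:
  assumes m: "m < n"
  shows "(\<Sum>g\<in>basis_idx d n. F g) = (\<Sum>c\<in>({..<n} - {m}) \<rightarrow>\<^sub>E {0..<d}. \<Sum>t<d. F (c(m := t)))"
proof -
  have "(\<Sum>c\<in>({..<n} - {m}) \<rightarrow>\<^sub>E {0..<d}. \<Sum>t<d. F (c(m := t))) =
        (\<Sum>(c,t)\<in>(({..<n} - {m}) \<rightarrow>\<^sub>E {0..<d}) \<times> {..<d}. F (c(m := t)))"
    by (rule sum.cartesian_product)
  also have "\<dots> = (\<Sum>g\<in>basis_idx d n. F g)"
  proof (rule sum.reindex_bij_witness[of _ "\<lambda>g. (g(m := undefined), g m)" "\<lambda>(c,t). c(m := t)"])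
    fix p assume "p \<in> (({..<n} - {m}) \<rightarrow>\<^sub>E {0..<d}) \<times> {..<d}"
    then obtain c t where p: "p = (c, t)" and c: "c \<in> ({..<n} - {m}) \<rightarrow>\<^sub>E {0..<d}" and t: "t < d"
      by auto
    have "c m = undefined" using c by (auto simp: PiE_iff extensional_def)
    then show "((case p of (c, t) \<Rightarrow> c(m := t))(m := undefined), (case p of (c, t) \<Rightarrow> c(m := t)) m) = p"
      using p by (auto simp: fun_eq_iff)
    show "(case p of (c, t) \<Rightarrow> c(m := t)) \<in> basis_idx d n"
      using c t m p unfolding basis_idx_eq by (auto simp: PiE_iff extensional_def)
    show "F (case p of (c, t) \<Rightarrow> c(m := t)) = (case p of (c, t) \<Rightarrow> F (c(m := t)))"
      using p by simp
  next
    fix g assume g: "g \<in> basis_idx d n"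
    show "(case (g(m := undefined), g m) of (c, t) \<Rightarrow> c(m := t)) = g" by simp
    show "(g(m := undefined), g m) \<in> (({..<n} - {m}) \<rightarrow>\<^sub>E {0..<d}) \<times> {..<d}"
      using g m unfolding basis_idx_eq by (auto simp: PiE_iff extensional_def)
  qed
  finally show ?thesis by simp
qed

lemma apply_local_op:
  assumes m: "m < n" and c: "c \<in> ({..<n} - {m}) \<rightarrow>\<^sub>E {0..<d}"
  shows "apply_op d n (local_op n m Ob) v (c(m := s)) = (\<Sum>t<d. Ob s t * v (c(m := t)))"
proof -
  let ?C = "({..<n} - {m}) \<rightarrow>\<^sub>E {0..<d}"
  have "local_op n m Ob (c(m := s)) (c'(m := t)) = (if c' = c then Ob s t else 0)"
    if c': "c' \<in> ?C" for c' t
  proof -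
    have "(\<forall>j<n. j \<noteq> m \<longrightarrow> (c(m := s)) j = (c'(m := t)) j) \<longleftrightarrow> (\<forall>j\<in>{..<n} - {m}. c' j = c j)"
      by auto
    also have "\<dots> \<longleftrightarrow> c' = c" using c c' by (auto intro: PiE_ext)
    finally show ?thesis unfolding local_op_def by (simp only: fun_upd_same)
  qed
  then have "apply_op d n (local_op n m Ob) v (c(m := s)) =
     (\<Sum>c'\<in>?C. if c' = c then (\<Sum>t<d. Ob s t * v (c(m := t))) else 0)"
    unfolding apply_op_def sum_basis_idx_split_factor[OF m] by (intro sum.cong refl) simp
  also have "\<dots> = (\<Sum>t<d. Ob s t * v (c(m := t)))" using c by (simp add: finite_PiE)
  finally show ?thesis .
qed

lemma sqnorm_local_op_le:
  assumes m: "m < n"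
  shows "sqnorm d n (apply_op d n (local_op n m Ob) v) \<le> (opnorm1 d Ob)\<^sup>2 * sqnorm d n v"
proof -
  let ?C = "({..<n} - {m}) \<rightarrow>\<^sub>E {0..<d}"
  have "sqnorm d n (apply_op d n (local_op n m Ob) v) =
      (\<Sum>c\<in>?C. \<Sum>s<d. (cmod (\<Sum>t<d. Ob s t * v (c(m := t))))\<^sup>2)"
    unfolding sqnorm_def sum_basis_idx_split_factor[OF m]
    by (intro sum.cong refl) (simp only: apply_local_op[OF m])
  also have "\<dots> \<le> (\<Sum>c\<in>?C. (opnorm1 d Ob)\<^sup>2 * (\<Sum>t<d. (cmod (v (c(m := t))))\<^sup>2))"
    by (rule sum_mono) (rule norm_mult_le_opnorm1)
  also have "\<dots> = (opnorm1 d Ob)\<^sup>2 * sqnorm d n v"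
    unfolding sqnorm_def sum_basis_idx_split_factor[OF m] sum_distrib_left ..
  finally show ?thesis .
qed

lemma cnj_local_op:
  assumes H: "hermitian1 d Ob" and m: "m < n" and f: "f \<in> basis_idx d n" and g: "g \<in> basis_idx d n"
  shows "cnj (local_op n m Ob f g) = local_op n m Ob g f"
proof -
  have "f m < d" "g m < d" using f g m by (simp_all add: basis_idx_lessD)
  then have h: "cnj (Ob (f m) (g m)) = Ob (g m) (f m)" using hermitian1D[OF H \<open>g m < d\<close> \<open>f m < d\<close>] by simp
  have c: "(\<forall>i<n. i \<noteq> m \<longrightarrow> g i = f i) \<longleftrightarrow> (\<forall>i<n. i \<noteq> m \<longrightarrow> f i = g i)" by auto
  show ?thesis unfolding local_op_def c by (auto simp: h)
qed

definition cyc_inv :: "nat \<Rightarrow> nat \<Rightarrow> nat \<Rightarrow> nat" where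
  "cyc_inv a k j = (if a < j \<and> j < a + k then j - 1 else if j = a then a + k - 1 else j)"

lemma cyc_cyc_inv: "1 \<le> k \<Longrightarrow> cyc a k (cyc_inv a k j) = j"
  unfolding cyc_def cyc_inv_def by auto

lemma cyc_inv_cyc: "1 \<le> k \<Longrightarrow> cyc_inv a k (cyc a k j) = j"
  unfolding cyc_def cyc_inv_def by auto

lemma cyc_less: "1 \<le> k \<Longrightarrow> a + k \<le> n \<Longrightarrow> j < n \<Longrightarrow> cyc a k j < n"
  unfolding cyc_def by auto

lemma cyc_inv_less: "1 \<le> k \<Longrightarrow> a + k \<le> n \<Longrightarrow> j < n \<Longrightarrow> cyc_inv a k j < n"
  unfolding cyc_inv_def by auto

lemma cyc_in_block: "j \<in> {a..<a+k} \<Longrightarrow> cyc a k j \<in> {a..<a+k}"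
  unfolding cyc_def by auto

lemma cyc_outside_block: "1 \<le> k \<Longrightarrow> j \<notin> {a..<a+k} \<Longrightarrow> cyc a k j = j"
  unfolding cyc_def by auto

definition cyc_idx :: "nat \<Rightarrow> nat \<Rightarrow> nat \<Rightarrow> (nat \<Rightarrow> nat) \<Rightarrow> nat \<Rightarrow> nat" where
  "cyc_idx a k n f = restrict (\<lambda>j. f (cyc a k j)) {..<n}"

definition cyc_idx_inv :: "nat \<Rightarrow> nat \<Rightarrow> nat \<Rightarrow> (nat \<Rightarrow> nat) \<Rightarrow> nat \<Rightarrow> nat" where
  "cyc_idx_inv a k n f = restrict (\<lambda>j. f (cyc_inv a k j)) {..<n}"

lemma cyc_idx_in: "1 \<le> k \<Longrightarrow> a + k \<le> n \<Longrightarrow> f \<in> basis_idx d n \<Longrightarrow> cyc_idx a k n f \<in> basis_idx d n"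
  unfolding basis_idx_eq cyc_idx_def using cyc_less by (auto simp: PiE_iff)

lemma cyc_idx_inv_in: "1 \<le> k \<Longrightarrow> a + k \<le> n \<Longrightarrow> f \<in> basis_idx d n \<Longrightarrow> cyc_idx_inv a k n f \<in> basis_idx d n"
  unfolding basis_idx_eq cyc_idx_inv_def using cyc_inv_less by (auto simp: PiE_iff)

lemma cyc_idx_inv_cyc_idx: "1 \<le> k \<Longrightarrow> a + k \<le> n \<Longrightarrow> f \<in> basis_idx d n \<Longrightarrow> cyc_idx_inv a k n (cyc_idx a k n f) = f"
  unfolding basis_idx_eq cyc_idx_def cyc_idx_inv_def
  by (auto simp: fun_eq_iff PiE_iff extensional_def cyc_inv_less cyc_cyc_inv)

lemma cyc_idx_cyc_idx_inv: "1 \<le> k \<Longrightarrow> a + k \<le> n \<Longrightarrow> f \<in> basis_idx d n \<Longrightarrow> cyc_idx a k n (cyc_idx_inv a k n f) = f"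
  unfolding basis_idx_eq cyc_idx_def cyc_idx_inv_def
  by (auto simp: fun_eq_iff PiE_iff extensional_def cyc_less cyc_inv_cyc)

lemma sum_basis_idx_cyc_idx:
  assumes "1 \<le> k" "a + k \<le> n"
  shows "(\<Sum>f\<in>basis_idx d n. G (cyc_idx a k n f)) = (\<Sum>h\<in>basis_idx d n. G h)"
  by (rule sum.reindex_bij_witness[of _ "cyc_idx_inv a k n" "cyc_idx a k n"])
     (simp_all add: cyc_idx_inv_cyc_idx[OF assms] cyc_idx_cyc_idx_inv[OF assms] cyc_idx_in[OF assms] cyc_idx_inv_in[OF assms])

lemma sum_basis_idx_cyc_idx_inv:
  assumes "1 \<le> k" "a + k \<le> n"
  shows "(\<Sum>f\<in>basis_idx d n. G (cyc_idx_inv a k n f)) = (\<Sum>h\<in>basis_idx d n. G h)"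
  by (rule sum.reindex_bij_witness[of _ "cyc_idx a k n" "cyc_idx_inv a k n"])
     (simp_all add: cyc_idx_inv_cyc_idx[OF assms] cyc_idx_cyc_idx_inv[OF assms] cyc_idx_in[OF assms] cyc_idx_inv_in[OF assms])

lemma perm_op_cyc_mult:
  assumes k: "1 \<le> k" and ak: "a + k \<le> n" and f: "f \<in> basis_idx d n"
  shows "opmult d n (perm_op n (cyc a k)) Z f g = Z (cyc_idx a k n f) g"
proof -
  have "perm_op n (cyc a k) f h = (if h = cyc_idx a k n f then 1 else 0)" if h: "h \<in> basis_idx d n" for h
  proof -
    have "(\<forall>i<n. f (cyc a k i) = h i) \<longleftrightarrow> h = cyc_idx a k n f"
      using h unfolding basis_idx_eq cyc_idx_def by (auto simp: fun_eq_iff PiE_iff extensional_def)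
    then show ?thesis unfolding perm_op_def by simp
  qed
  then have "opmult d n (perm_op n (cyc a k)) Z f g = (\<Sum>h\<in>basis_idx d n. if h = cyc_idx a k n f then Z h g else 0)"
    unfolding opmult_def by (intro sum.cong refl) auto
  also have "\<dots> = Z (cyc_idx a k n f) g"
    using cyc_idx_in[OF k ak f] by (simp add: basis_idx_def finite_PiE)
  finally show ?thesis .
qed

lemma A_op_eq_local_op:
  assumes "1 \<le> k" "i * k + k \<le> n" "f \<in> basis_idx d n"
  shows "A_op d n k Ob i f g = local_op n (i * k) Ob (cyc_idx (i * k) k n f) g"
  unfolding A_op_def using perm_op_cyc_mult[OF assms] .

lemma A_op_acts_on_block:
  assumes k: "1 \<le> k" and ik: "i * k + k \<le> n"
  shows "acts_on d n {i*k..<i*k+k} (A_op d n k Ob i)"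
  unfolding acts_on_def
proof (intro exI ballI)
  \<comment> \<open>cyc permutes the block and fixes its complement, so only indices agreeing off the block are coupled\<close>
  let ?J = "{i*k..<i*k+k}" and ?m = "i * k"
  fix f g assume f: "f \<in> basis_idx d n" and g: "g \<in> basis_idx d n"
  have mJ: "?m \<in> ?J" using k by auto
  have Jn: "?J \<subseteq> {..<n}" using ik by auto
  have "(\<forall>j<n. j \<noteq> ?m \<longrightarrow> cyc_idx ?m k n f j = g j) \<longleftrightarrow> (\<forall>j<n. j \<noteq> ?m \<longrightarrow> f (cyc ?m k j) = g j)"
    unfolding cyc_idx_def by auto
  also have "\<dots> \<longleftrightarrow> (\<forall>j\<in>{..<n} - ?J. f j = g j) \<and> (\<forall>j\<in>?J. j \<noteq> ?m \<longrightarrow> f (cyc ?m k j) = g j)"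
    using cyc_outside_block[OF k, of _ ?m] Jn mJ by auto
  also have "\<dots> \<longleftrightarrow> (\<forall>j\<in>{..<n} - ?J. f j = g j) \<and>
      (\<forall>j\<in>?J. j \<noteq> ?m \<longrightarrow> restrict f ?J (cyc ?m k j) = restrict g ?J j)"
    using cyc_in_block[of _ ?m k] by auto
  finally have off_diag: "(\<forall>j<n. j \<noteq> ?m \<longrightarrow> cyc_idx ?m k n f j = g j) \<longleftrightarrow> \<dots>" .
  have diag: "cyc_idx ?m k n f ?m = restrict f ?J (cyc ?m k ?m)" "g ?m = restrict g ?J ?m"
    using mJ Jn cyc_in_block[OF mJ] unfolding cyc_idx_def by auto
  show "A_op d n k Ob i f g = (if \<forall>j\<in>{..<n} - ?J. f j = g j then
     (\<lambda>a b. if \<forall>j\<in>?J. j \<noteq> ?m \<longrightarrow> a (cyc ?m k j) = b j then Ob (a (cyc ?m k ?m)) (b ?m) else 0)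
       (restrict f ?J) (restrict g ?J) else 0)"
    unfolding A_op_eq_local_op[OF k ik f] local_op_def using off_diag diag by auto
qed

lemma sqnorm_A_op_le:
  assumes k: "1 \<le> k" and ik: "i * k + k \<le> n"
  shows "sqnorm d n (apply_op d n (A_op d n k Ob i) v) \<le> (opnorm1 d Ob)\<^sup>2 * sqnorm d n v"
proof -
  let ?L = "local_op n (i*k) Ob"
  have "sqnorm d n (apply_op d n (A_op d n k Ob i) v) =
      (\<Sum>f\<in>basis_idx d n. (cmod (apply_op d n ?L v (cyc_idx (i*k) k n f)))\<^sup>2)"
    unfolding sqnorm_def apply_op_def by (intro sum.cong refl) (simp add: A_op_eq_local_op[OF k ik])
  also have "\<dots> = sqnorm d n (apply_op d n ?L v)"
    unfolding sqnorm_def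
    by (rule sum_basis_idx_cyc_idx[OF k ik, where G="\<lambda>h. (cmod (apply_op d n ?L v h))\<^sup>2"])
  also have "\<dots> \<le> (opnorm1 d Ob)\<^sup>2 * sqnorm d n v"
    using k ik by (intro sqnorm_local_op_le) simp
  finally show ?thesis .
qed

lemma sqnorm_adj_A_op_le:
  assumes H: "hermitian1 d Ob" and k: "1 \<le> k" and ik: "i * k + k \<le> n"
  shows "sqnorm d n (apply_op d n (adj (A_op d n k Ob i)) v) \<le> (opnorm1 d Ob)\<^sup>2 * sqnorm d n v"
proof -
  have m: "i * k < n" using k ik by simp
  let ?L = "local_op n (i*k) Ob" and ?w = "\<lambda>h. v (cyc_idx_inv (i*k) k n h)"
  \<comment> \<open>adj (U L) = L U^-1, as the permutation matrix U is unitary and L is Hermitian\<close>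
  have adj_eq: "apply_op d n (adj (A_op d n k Ob i)) v g = apply_op d n ?L ?w g"
    if g: "g \<in> basis_idx d n" for g
  proof -
    have "apply_op d n (adj (A_op d n k Ob i)) v g =
        (\<Sum>f\<in>basis_idx d n. cnj (?L (cyc_idx (i*k) k n f) g) * v (cyc_idx_inv (i*k) k n (cyc_idx (i*k) k n f)))"
      unfolding apply_op_def adj_def
      by (intro sum.cong refl) (simp add: A_op_eq_local_op[OF k ik] cyc_idx_inv_cyc_idx[OF k ik])
    also have "\<dots> = (\<Sum>h\<in>basis_idx d n. cnj (?L h g) * ?w h)"
      by (rule sum_basis_idx_cyc_idx[OF k ik, where G="\<lambda>h. cnj (?L h g) * ?w h"])
    also have "\<dots> = apply_op d n ?L ?w g"
      unfolding apply_op_def by (intro sum.cong refl) (simp add: cnj_local_op[OF H m _ g])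
    finally show ?thesis .
  qed
  have "sqnorm d n (apply_op d n (adj (A_op d n k Ob i)) v) = sqnorm d n (apply_op d n ?L ?w)"
    unfolding sqnorm_def by (intro sum.cong refl) (simp add: adj_eq)
  also have "\<dots> \<le> (opnorm1 d Ob)\<^sup>2 * sqnorm d n ?w" by (rule sqnorm_local_op_le[OF m])
  also have "sqnorm d n ?w = sqnorm d n v"
    unfolding sqnorm_def
    by (rule sum_basis_idx_cyc_idx_inv[OF k ik, where G="\<lambda>h. (cmod (v h))\<^sup>2"])
  finally show ?thesis .
qed

definition A_sym :: "nat \<Rightarrow> nat \<Rightarrow> nat \<Rightarrow> op1 \<Rightarrow> nat \<Rightarrow> opn" where
  "A_sym d n k Ob i = (\<lambda>f g. A_op d n k Ob i f g + adj (A_op d n k Ob i) f g)"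

lemma A_sym_acts_on_block: "1 \<le> k \<Longrightarrow> i * k + k \<le> n \<Longrightarrow> acts_on d n {i*k..<i*k+k} (A_sym d n k Ob i)"
  unfolding A_sym_def by (intro acts_on_add acts_on_adj A_op_acts_on_block)

lemma norm_add_squared_le:
  fixes x y :: "'a::real_normed_vector"
  shows "(norm (x + y))\<^sup>2 \<le> 2 * (norm x)\<^sup>2 + 2 * (norm y)\<^sup>2"
proof -
  have "(norm (x + y))\<^sup>2 \<le> (norm x + norm y)\<^sup>2" by (intro power_mono norm_triangle_ineq) simp
  also have "\<dots> \<le> 2 * (norm x)\<^sup>2 + 2 * (norm y)\<^sup>2"
    using zero_le_power2[of "norm x - norm y"] unfolding power2_sum power2_diff by linarith
  finally show ?thesis .
qed

lemma sqnorm_A_sym_le: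
  assumes H: "hermitian1 d Ob" and k: "1 \<le> k" and ik: "i * k + k \<le> n"
  shows "sqnorm d n (apply_op d n (A_sym d n k Ob i) v) \<le> 4 * (opnorm1 d Ob)\<^sup>2 * sqnorm d n v"
proof -
  let ?A = "A_op d n k Ob i"
  have "apply_op d n (A_sym d n k Ob i) v f = apply_op d n ?A v f + apply_op d n (adj ?A) v f" for f
    unfolding apply_op_def A_sym_def by (simp add: sum.distrib distrib_right)
  then have "sqnorm d n (apply_op d n (A_sym d n k Ob i) v)
      \<le> (\<Sum>f\<in>basis_idx d n. 2 * (cmod (apply_op d n ?A v f))\<^sup>2 + 2 * (cmod (apply_op d n (adj ?A) v f))\<^sup>2)"
    unfolding sqnorm_def by (intro sum_mono) (simp add: norm_add_squared_le)
  also have "\<dots> = 2 * sqnorm d n (apply_op d n ?A v) + 2 * sqnorm d n (apply_op d n (adj ?A) v)"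
    unfolding sqnorm_def by (simp add: sum.distrib sum_distrib_left)
  also have "\<dots> \<le> 4 * (opnorm1 d Ob)\<^sup>2 * sqnorm d n v"
    using sqnorm_A_op_le[OF k ik, of d Ob v] sqnorm_adj_A_op_le[OF H k ik, of v] by linarith
  finally show ?thesis .
qed

section \<open>Second moments in a product state\<close>

definition gram_prod :: "nat \<Rightarrow> (nat \<Rightarrow> nat \<Rightarrow> complex) \<Rightarrow> (nat \<Rightarrow> nat) \<Rightarrow> (nat \<Rightarrow> nat) \<Rightarrow> complex" where
  "gram_prod n r L f = (\<Prod>j<n. r (L j) (f j))"

lemma tensor_pow_gram:
  assumes r: "\<forall>a<d. \<forall>b<d. \<rho> a b = (\<Sum>l<d. r l a * cnj (r l b))"
    and h: "h \<in> basis_idx d n" and f: "f \<in> basis_idx d n"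
  shows "tensor_pow n \<rho> h f = (\<Sum>L\<in>basis_idx d n. gram_prod n r L h * cnj (gram_prod n r L f))"
proof -
  have "tensor_pow n \<rho> h f = (\<Prod>j<n. \<Sum>l\<in>{0..<d}. r l (h j) * cnj (r l (f j)))"
    unfolding tensor_pow_def
  proof (rule prod.cong[OF refl])
    fix j assume "j \<in> {..<n}"
    then have "h j < d" "f j < d" using h f by (simp_all add: basis_idx_lessD)
    then show "\<rho> (h j) (f j) = (\<Sum>l\<in>{0..<d}. r l (h j) * cnj (r l (f j)))"
      using r by (simp add: atLeast0LessThan)
  qed
  also have "\<dots> = (\<Sum>L\<in>{..<n} \<rightarrow>\<^sub>E {0..<d}. \<Prod>j<n. r (L j) (h j) * cnj (r (L j) (f j)))"
    by (rule prod_sum_PiE) auto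
  also have "\<dots> = (\<Sum>L\<in>basis_idx d n. gram_prod n r L h * cnj (gram_prod n r L f))"
    unfolding basis_idx_eq gram_prod_def by (simp add: prod.distrib cnj_prod)
  finally show ?thesis .
qed

lemma sum_sqnorm_gram_prod:
  assumes r: "\<forall>a<d. \<forall>b<d. \<rho> a b = (\<Sum>l<d. r l a * cnj (r l b))" and tr: "(\<Sum>t<d. \<rho> t t) = 1"
  shows "(\<Sum>L\<in>basis_idx d n. sqnorm d n (gram_prod n r L)) = 1"
proof -
  have "(\<Sum>t<d. \<rho> t t) = (\<Sum>t<d. of_real (\<Sum>l<d. (cmod (r l t))\<^sup>2))"
  proof (rule sum.cong[OF refl])
    fix t assume "t \<in> {..<d}"
    then have "\<rho> t t = (\<Sum>l<d. r l t * cnj (r l t))" using r by auto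
    then show "\<rho> t t = of_real (\<Sum>l<d. (cmod (r l t))\<^sup>2)"
      unfolding of_real_sum complex_norm_square .
  qed
  then have "complex_of_real (\<Sum>t<d. \<Sum>l<d. (cmod (r l t))\<^sup>2) = 1"
    using tr unfolding of_real_sum by simp
  then have "(\<Sum>t<d. \<Sum>l<d. (cmod (r l t))\<^sup>2) = 1" by (simp only: of_real_eq_1_iff)
  then have one: "(\<Sum>l\<in>{0..<d}. \<Sum>t\<in>{0..<d}. (cmod (r l t))\<^sup>2) = 1"
    unfolding atLeast0LessThan by (subst sum.swap)
  have "(\<Sum>L\<in>basis_idx d n. sqnorm d n (gram_prod n r L))
      = (\<Sum>L\<in>{..<n} \<rightarrow>\<^sub>E {0..<d}. \<Sum>f\<in>{..<n} \<rightarrow>\<^sub>E {0..<d}. \<Prod>j<n. (cmod (r (L j) (f j)))\<^sup>2)"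
    unfolding sqnorm_def gram_prod_def basis_idx_eq by (simp add: prod_norm[symmetric] prod_power_distrib)
  also have "\<dots> = (\<Sum>L\<in>{..<n} \<rightarrow>\<^sub>E {0..<d}. \<Prod>j<n. \<Sum>t\<in>{0..<d}. (cmod (r (L j) t))\<^sup>2)"
    by (intro sum.cong refl) (rule prod_sum_PiE[symmetric], auto)
  also have "\<dots> = (\<Prod>j<n. \<Sum>l\<in>{0..<d}. \<Sum>t\<in>{0..<d}. (cmod (r l t))\<^sup>2)"
    by (rule prod_sum_PiE[where f="\<lambda>j l. \<Sum>t\<in>{0..<d}. (cmod (r l t))\<^sup>2", symmetric]) auto
  also have "\<dots> = 1" using one by simp
  finally show ?thesis .
qed

definition hermitian_op :: "nat \<Rightarrow> nat \<Rightarrow> opn \<Rightarrow> bool" where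
  "hermitian_op d n B \<longleftrightarrow> (\<forall>f\<in>basis_idx d n. \<forall>g\<in>basis_idx d n. cnj (B f g) = B g f)"

lemma hermitian_op_A_sym: "hermitian_op d n (A_sym d n k Ob i)"
  unfolding hermitian_op_def A_sym_def adj_def by simp

lemma inner_apply_square_eq_sqnorm:
  assumes B: "hermitian_op d n B"
  shows "(\<Sum>f\<in>basis_idx d n. cnj (v f) * apply_op d n (opmult d n B B) v f) = of_real (sqnorm d n (apply_op d n B v))"
proof -
  let ?w = "apply_op d n B v"
  have "apply_op d n (opmult d n B B) v f = (\<Sum>g\<in>basis_idx d n. B f g * ?w g)" for f
  proof -
    have "apply_op d n (opmult d n B B) v f = (\<Sum>h\<in>basis_idx d n. \<Sum>g\<in>basis_idx d n. B f g * B g h * v h)"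
      unfolding apply_op_def opmult_def by (simp add: sum_distrib_right)
    also have "\<dots> = (\<Sum>g\<in>basis_idx d n. B f g * ?w g)"
      unfolding apply_op_def by (subst sum.swap) (simp add: sum_distrib_left mult_ac)
    finally show ?thesis .
  qed
  then have "(\<Sum>f\<in>basis_idx d n. cnj (v f) * apply_op d n (opmult d n B B) v f) =
        (\<Sum>f\<in>basis_idx d n. \<Sum>g\<in>basis_idx d n. cnj (v f) * B f g * ?w g)"
    by (simp add: sum_distrib_left mult_ac)
  also have "\<dots> = (\<Sum>g\<in>basis_idx d n. \<Sum>f\<in>basis_idx d n. cnj (v f) * B f g * ?w g)"
    by (rule sum.swap)
  also have "\<dots> = (\<Sum>g\<in>basis_idx d n. cnj (?w g) * ?w g)"
  proof (rule sum.cong[OF refl])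
    fix g assume g: "g \<in> basis_idx d n"
    have "cnj (?w g) = (\<Sum>f\<in>basis_idx d n. cnj (v f) * B f g)"
      unfolding apply_op_def using B g unfolding hermitian_op_def by (auto intro!: sum.cong simp: mult.commute)
    then show "(\<Sum>f\<in>basis_idx d n. cnj (v f) * B f g * ?w g) = cnj (?w g) * ?w g"
      by (simp add: sum_distrib_right)
  qed
  also have "\<dots> = of_real (sqnorm d n ?w)"
    unfolding sqnorm_def of_real_sum complex_norm_square by (simp add: mult.commute)
  finally show ?thesis .
qed

lemma expval_opmult_self_gram:
  assumes r: "\<forall>a<d. \<forall>b<d. \<rho> a b = (\<Sum>l<d. r l a * cnj (r l b))" and B: "hermitian_op d n B"
  shows "expval d n \<rho> (opmult d n B B) = of_real (\<Sum>L\<in>basis_idx d n. sqnorm d n (apply_op d n B (gram_prod n r L)))"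
proof -
  let ?R = "gram_prod n r"
  have "expval d n \<rho> (opmult d n B B) =
      (\<Sum>f\<in>basis_idx d n. \<Sum>h\<in>basis_idx d n. \<Sum>L\<in>basis_idx d n. opmult d n B B f h * (?R L h * cnj (?R L f)))"
    unfolding expval_def by (intro sum.cong refl) (simp add: tensor_pow_gram[OF r] sum_distrib_left)
  also have "\<dots> = (\<Sum>L\<in>basis_idx d n. \<Sum>f\<in>basis_idx d n. \<Sum>h\<in>basis_idx d n. opmult d n B B f h * (?R L h * cnj (?R L f)))"
    by (subst sum.swap, rule sum.cong[OF refl], rule sum.swap)
  also have "\<dots> = (\<Sum>L\<in>basis_idx d n. \<Sum>f\<in>basis_idx d n. cnj (?R L f) * apply_op d n (opmult d n B B) (?R L) f)"
    unfolding apply_op_def by (intro sum.cong refl) (simp add: sum_distrib_left mult_ac)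
  also have "\<dots> = of_real (\<Sum>L\<in>basis_idx d n. sqnorm d n (apply_op d n B (?R L)))"
    unfolding of_real_sum by (intro sum.cong refl) (rule inner_apply_square_eq_sqnorm[OF B])
  finally show ?thesis .
qed

lemma expval_hermitian_real:
  assumes H: "hermitian1 d \<rho>" and B: "hermitian_op d n B"
  shows "expval d n \<rho> B \<in> \<real>"
proof -
  have "cnj (tensor_pow n \<rho> h f) = tensor_pow n \<rho> f h" if "h \<in> basis_idx d n" "f \<in> basis_idx d n" for h f
    unfolding tensor_pow_def cnj_prod
  proof (rule prod.cong[OF refl])
    fix j assume "j \<in> {..<n}"
    then have "h j < d" "f j < d" using that by (simp_all add: basis_idx_lessD)
    then show "cnj (\<rho> (h j) (f j)) = \<rho> (f j) (h j)" using hermitian1D[OF H \<open>f j < d\<close> \<open>h j < d\<close>] by simp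
  qed
  then have "cnj (expval d n \<rho> B) = (\<Sum>f\<in>basis_idx d n. \<Sum>h\<in>basis_idx d n. B h f * tensor_pow n \<rho> f h)"
    unfolding expval_def cnj_sum using B unfolding hermitian_op_def by (intro sum.cong refl) simp
  also have "\<dots> = expval d n \<rho> B" unfolding expval_def by (rule sum.swap)
  finally show ?thesis by (simp add: Reals_cnj_iff)
qed

lemma variance_le_sqnorm_bound:
  assumes \<rho>: "density1 d \<rho>" and B: "hermitian_op d n B"
    and bound: "\<And>v. sqnorm d n (apply_op d n B v) \<le> C * sqnorm d n v"
  shows "variance d n \<rho> B \<in> \<real>" "Re (variance d n \<rho> B) \<le> C"
proof -
  obtain r where r: "\<forall>a<d. \<forall>b<d. \<rho> a b = (\<Sum>l<d. r l a * cnj (r l b))"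
    using psd1_gram[OF density1_imp_psd1[OF \<rho>]] by blast
  have tr: "(\<Sum>t<d. \<rho> t t) = 1" and H: "hermitian1 d \<rho>" using \<rho> unfolding density1_def by auto
  define M where "M = (\<Sum>L\<in>basis_idx d n. sqnorm d n (apply_op d n B (gram_prod n r L)))"
  have "M \<le> (\<Sum>L\<in>basis_idx d n. C * sqnorm d n (gram_prod n r L))"
    unfolding M_def by (intro sum_mono bound)
  also have "\<dots> = C" by (simp add: sum_distrib_left[symmetric] sum_sqnorm_gram_prod[OF r tr])
  finally have M: "M \<le> C" .
  obtain e where e: "expval d n \<rho> B = of_real e"
    using expval_hermitian_real[OF H B] by (auto elim: Reals_cases)
  have V: "variance d n \<rho> B = of_real (M - e\<^sup>2)"
    unfolding variance_expval expval_opmult_self_gram[OF r B] M_def[symmetric] e by simp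
  show "variance d n \<rho> B \<in> \<real>" unfolding V by (rule Reals_of_real)
  show "Re (variance d n \<rho> B) \<le> C"
    unfolding V Re_complex_of_real using M zero_le_power2[of e] by linarith
qed

lemma block_le_of_less_div:
  assumes "i < n div k"
  shows "i * k + k \<le> (n::nat)"
proof -
  have "i * k + k \<le> n div k * k" using assms mult_le_mono1[of "Suc i" "n div k" k] by simp
  then show ?thesis using div_times_less_eq_dividend[of n k] by linarith
qed

lemma div_eq_of_mem_block: "x \<in> {i*k..<i*k+k} \<Longrightarrow> x div k = (i::nat)"
  by (rule div_nat_eqI) (auto simp: mult.commute)

lemma A_sym_uncorrelated:
  assumes tr: "(\<Sum>t<d. \<rho> t t) = 1" and k: "1 \<le> k"
    and ij: "i < n div k" "j < n div k" "i \<noteq> j"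
  shows "expval d n \<rho> (opmult d n (A_sym d n k Ob i) (A_sym d n k Ob j))
       = expval d n \<rho> (A_sym d n k Ob i) * expval d n \<rho> (A_sym d n k Ob j)"
proof (rule expval_mult_acts_on_disjoint[where \<rho>=\<rho>, OF _ _ _ tr])
  show "{i*k..<i*k+k} \<subseteq> {..<n}" using block_le_of_less_div[OF ij(1)] by auto
  show "acts_on d n {i*k..<i*k+k} (A_sym d n k Ob i)"
    by (rule A_sym_acts_on_block[OF k block_le_of_less_div[OF ij(1)]])
  have "{j*k..<j*k+k} \<subseteq> {..<n} - {i*k..<i*k+k}"
    using block_le_of_less_div[OF ij(2)] div_eq_of_mem_block[of _ i k] div_eq_of_mem_block[of _ j k] ij(3)
    by fastforce
  then show "acts_on d n ({..<n} - {i*k..<i*k+k}) (A_sym d n k Ob j)"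
    by (rule acts_on_mono) (use A_sym_acts_on_block[OF k block_le_of_less_div[OF ij(2)]] in auto)
qed

lemma variance_T_op:
  assumes "(\<Sum>t<d. \<rho> t t) = 1" and "1 \<le> k"
  shows "variance d n \<rho> (T_op d n k Ob)
       = of_real ((1 / (2 * real (n div k)))\<^sup>2) * (\<Sum>i<n div k. variance d n \<rho> (A_sym d n k Ob i))"
proof -
  have "T_op d n k Ob = (\<lambda>f g. of_real (1 / (2 * real (n div k))) * (\<Sum>i<n div k. A_sym d n k Ob i f g))"
    unfolding T_op_def A_sym_def by simp
  moreover have "variance d n \<rho> (\<lambda>f g. \<Sum>i<n div k. A_sym d n k Ob i f g)
      = (\<Sum>i<n div k. variance d n \<rho> (A_sym d n k Ob i))"
    using A_sym_uncorrelated[where \<rho>=\<rho>, OF assms] by (intro variance_sum_uncorrelated) auto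
  ultimately show ?thesis
    using variance_scale[of d n \<rho> "of_real (1 / (2 * real (n div k)))" "\<lambda>f g. \<Sum>i<n div k. A_sym d n k Ob i f g"]
    by simp
qed

lemma block_average_bound:
  fixes C :: real and k n :: nat
  assumes k: "0 < k" "k \<le> n" and C: "0 \<le> C"
  shows "(1 / (2 * real (n div k)))\<^sup>2 * (real (n div k) * (4 * C)) \<le> 2 * real k * C / real n"
proof -
  have q: "0 < n div k" using k unfolding div_greater_zero_iff by blast
  have "n < k * (n div k) + k" using mod_less_divisor[OF k(1), of n] mult_div_mod_eq[of k n] by linarith
  moreover have "k \<le> k * (n div k)" using q by simp
  ultimately have "n \<le> 2 * k * (n div k)" by (simp only: mult.assoc)
  then have "real n \<le> 2 * real k * real (n div k)" by (metis of_nat_le_iff of_nat_mult of_nat_numeral)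
  then have "real n * C \<le> 2 * real k * real (n div k) * C" using C by (rule mult_right_mono)
  then show ?thesis using q k by (simp add: field_simps power2_eq_square)
qed

theorem lemma2p19:
  fixes d n k :: nat and Ob \<rho> :: "nat \<Rightarrow> nat \<Rightarrow> complex"
  assumes "hermitian1 d Ob"
    and "density1 d \<rho>"
    and "1 \<le> n" and "1 \<le> k" and "k \<le> n"
  shows "variance d n \<rho> (T_op d n k Ob) \<in> \<real>
       \<and> Re (variance d n \<rho> (T_op d n k Ob)) \<le> 2 * real k * (opnorm1 d Ob)\<^sup>2 / real n"
proof -
  have tr: "(\<Sum>t<d. \<rho> t t) = 1" using assms(2) unfolding density1_def by blast
  have var_B: "variance d n \<rho> (A_sym d n k Ob i) \<in> \<real>"
    "Re (variance d n \<rho> (A_sym d n k Ob i)) \<le> 4 * (opnorm1 d Ob)\<^sup>2" if "i < n div k" for i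
    using variance_le_sqnorm_bound[OF assms(2) hermitian_op_A_sym
        sqnorm_A_sym_le[OF assms(1,4) block_le_of_less_div[OF that]]]
    by simp_all
  note var_T = variance_T_op[where \<rho>=\<rho> and Ob=Ob, OF tr assms(4)]
  have real: "variance d n \<rho> (T_op d n k Ob) \<in> \<real>"
    unfolding var_T using var_B(1) by (intro Reals_mult Reals_of_real sum_in_Reals) auto
  have "Re (variance d n \<rho> (T_op d n k Ob))
      = (1 / (2 * real (n div k)))\<^sup>2 * (\<Sum>i<n div k. Re (variance d n \<rho> (A_sym d n k Ob i)))"
    unfolding var_T by (simp add: Re_sum)
  also have "\<dots> \<le> (1 / (2 * real (n div k)))\<^sup>2 * (\<Sum>i<n div k. 4 * (opnorm1 d Ob)\<^sup>2)"
    using var_B(2) by (intro mult_left_mono sum_mono) auto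
  also have "\<dots> \<le> 2 * real k * (opnorm1 d Ob)\<^sup>2 / real n"
    using block_average_bound[of k n "(opnorm1 d Ob)\<^sup>2"] assms(4,5) by simp
  finally show ?thesis using real by blast
qed

end
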